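(* Let $H$ be a finite, connected, simple planar map with at least $3$ vertices. Let $LD(H)$ be the number of vertices of $H$ of degree at most $5$, and let $ME(H)=\sum_f(\deg[f]-3)$, the sum over all faces $f$ of $H$ including the external face. Then $LD(H)\ge\frac25 ME(H)+\frac{12}{5}$.
   Context: A planar map is a planar graph together with an embedding in the plane. $\deg[f]$ is the degree (length of the boundary walk) of the face $f$. $ME(H)$ equals the number of edges that can be added to $H$ while keeping it a simple planar map. *)

theory Defs
  imports Complex_Main "HOL-Combinatorics.Permutations"
begin

text \<open>Planar maps are represented combinatorially as rotation systems (combinatorial maps):
  a finite set D of darts (half-edges), a fixed-point-free involution alpha on D pairing the
  two darts of each edge, and a permutation sigma on D giving the cyclic order of darts around
  each vertex.  The map is planar (genus 0) iff V - E + F = 2 (for connected maps).\<close>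

definition orb :: "('d \<Rightarrow> 'd) \<Rightarrow> 'd \<Rightarrow> 'd set" where
  "orb f x = {(f ^^ n) x | n. True}"

definition orbs :: "('d \<Rightarrow> 'd) \<Rightarrow> 'd set \<Rightarrow> 'd set set" where
  "orbs f D = orb f ` D"

definition comb_map :: "'d set \<Rightarrow> ('d \<Rightarrow> 'd) \<Rightarrow> ('d \<Rightarrow> 'd) \<Rightarrow> bool" where
  "comb_map D \<alpha> \<sigma> \<longleftrightarrow> finite D \<and> \<alpha> permutes D \<and> \<sigma> permutes D
     \<and> (\<forall>d\<in>D. \<alpha> d \<noteq> d \<and> \<alpha> (\<alpha> d) = d)"

definition map_vertices :: "'d set \<Rightarrow> ('d \<Rightarrow> 'd) \<Rightarrow> ('d \<Rightarrow> 'd) \<Rightarrow> 'd set set" where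
  "map_vertices D \<alpha> \<sigma> = orbs \<sigma> D"

definition map_edges :: "'d set \<Rightarrow> ('d \<Rightarrow> 'd) \<Rightarrow> ('d \<Rightarrow> 'd) \<Rightarrow> 'd set set" where
  "map_edges D \<alpha> \<sigma> = orbs \<alpha> D"

definition map_faces :: "'d set \<Rightarrow> ('d \<Rightarrow> 'd) \<Rightarrow> ('d \<Rightarrow> 'd) \<Rightarrow> 'd set set" where
  "map_faces D \<alpha> \<sigma> = orbs (\<sigma> \<circ> \<alpha>) D"

definition vdeg :: "'d set \<Rightarrow> nat" where "vdeg v = card v"
definition fdeg :: "'d set \<Rightarrow> nat" where "fdeg f = card f"

definition map_connected :: "'d set \<Rightarrow> ('d \<Rightarrow> 'd) \<Rightarrow> ('d \<Rightarrow> 'd) \<Rightarrow> bool" where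
  "map_connected D \<alpha> \<sigma> \<longleftrightarrow>
     (\<forall>x\<in>D. \<forall>y\<in>D. (x, y) \<in> ({(d, \<sigma> d) | d. d \<in> D} \<union> {(d, \<alpha> d) | d. d \<in> D})\<^sup>*)"

definition map_planar :: "'d set \<Rightarrow> ('d \<Rightarrow> 'd) \<Rightarrow> ('d \<Rightarrow> 'd) \<Rightarrow> bool" where
  "map_planar D \<alpha> \<sigma> \<longleftrightarrow>
     int (card (map_vertices D \<alpha> \<sigma>)) - int (card (map_edges D \<alpha> \<sigma>))
       + int (card (map_faces D \<alpha> \<sigma>)) = 2"

text \<open>Simple: no loops, no multiple edges.\<close>
definition map_simple :: "'d set \<Rightarrow> ('d \<Rightarrow> 'd) \<Rightarrow> ('d \<Rightarrow> 'd) \<Rightarrow> bool" where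
  "map_simple D \<alpha> \<sigma> \<longleftrightarrow>
     (\<forall>d\<in>D. orb \<sigma> (\<alpha> d) \<noteq> orb \<sigma> d)
     \<and> (\<forall>d\<in>D. \<forall>d'\<in>D. orb \<sigma> d = orb \<sigma> d' \<and> orb \<sigma> (\<alpha> d) = orb \<sigma> (\<alpha> d') \<longrightarrow> d = d')"

definition LD :: "'d set \<Rightarrow> ('d \<Rightarrow> 'd) \<Rightarrow> ('d \<Rightarrow> 'd) \<Rightarrow> nat" where
  "LD D \<alpha> \<sigma> = card {v \<in> map_vertices D \<alpha> \<sigma>. vdeg v \<le> 5}"

definition ME :: "'d set \<Rightarrow> ('d \<Rightarrow> 'd) \<Rightarrow> ('d \<Rightarrow> 'd) \<Rightarrow> int" where
  "ME D \<alpha> \<sigma> = (\<Sum>f\<in>map_faces D \<alpha> \<sigma>. int (fdeg f) - 3)"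

end

theory Submission
  imports Defs "HOL-Combinatorics.Orbits"
begin

text \<open>Counting darts three ways: as \<open>\<Sum>\<^sub>v deg v\<close>, as \<open>\<Sum>\<^sub>f deg f\<close> and as \<open>2 |E|\<close>.
  Every vertex has degree at least 1 and a vertex not counted by \<open>LD\<close> has degree at least 6,
  so \<open>6 |V| \<le> 2 |E| + 5 LD\<close>; moreover \<open>ME = 2 |E| - 3 |F|\<close>. Eliminating \<open>|F|\<close> with Euler's
  formula \<open>|V| - |E| + |F| = 2\<close> gives \<open>5 LD \<ge> 2 ME + 12\<close>.\<close>

lemma orb_eq_orbit:
  assumes "f permutes D" "finite D"
  shows "orb f x = orbit f x"
  using orbit_altdef_permutation[of f x] assms
  by (auto simp: orb_def permutation_permutes)

lemma orb_self: "x \<in> orb f x"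
  unfolding orb_def by (auto intro: exI[where x=0])

lemma orb_subset:
  assumes "f permutes D" "x \<in> D"
  shows "orb f x \<subseteq> D"
  using assms by (auto simp: orb_def permutes_in_funpow_image)

lemma orb_eq_if_mem:
  assumes "f permutes D" "finite D" "y \<in> orb f x"
  shows "orb f y = orb f x"
  using assms orbit_cyclic_eq3[OF cyclic_on_orbit[OF assms(1,2)], of y x]
  by (simp add: orb_eq_orbit[OF assms(1,2)])

lemma orb_involution:
  assumes "f (f x) = x"
  shows "orb f x = {x, f x}"
proof -
  have "(f ^^ n) x \<in> {x, f x}" for n
    by (induct n) (auto simp: assms)
  moreover have "f x = (f ^^ 1) x" "x = (f ^^ 0) x" by simp_all
  ultimately show ?thesis unfolding orb_def by blast
qed

lemma finite_orbs:
  assumes "finite D"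
  shows "finite (orbs f D)"
  using assms by (simp add: orbs_def)

lemma finite_nonempty_orbs:
  assumes "f permutes D" "finite D" "A \<in> orbs f D"
  shows "finite A" "A \<noteq> {}"
  using assms orb_subset[OF assms(1)] orb_self finite_subset
  by (fastforce simp: orbs_def)+

lemma disjoint_orbs:
  assumes "f permutes D" "finite D"
  shows "disjoint (orbs f D)"
proof (rule pairwiseI, unfold disjnt_def)
  fix A B assume "A \<in> orbs f D" "B \<in> orbs f D" "A \<noteq> B"
  then obtain a b where ab: "A = orb f a" "B = orb f b" by (auto simp: orbs_def)
  show "A \<inter> B = {}"
  proof (rule ccontr)
    assume "A \<inter> B \<noteq> {}"
    then obtain y where "y \<in> orb f a" "y \<in> orb f b" using ab by auto
    then have "orb f a = orb f b" using orb_eq_if_mem[OF assms] by metis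
    with ab \<open>A \<noteq> B\<close> show False by simp
  qed
qed

lemma Union_orbs:
  assumes "f permutes D"
  shows "\<Union>(orbs f D) = D"
  using orb_subset[OF assms] orb_self by (fastforce simp: orbs_def)

lemma sum_card_orbs:
  assumes "f permutes D" "finite D"
  shows "(\<Sum>A\<in>orbs f D. card A) = card D"
  using card_Union_disjoint[OF disjoint_orbs[OF assms] finite_nonempty_orbs(1)[OF assms]]
    Union_orbs[OF assms(1)]
  by simp

lemma card_le_sum_card_plus_card_small:
  fixes V :: "'a set set" and k :: nat
  assumes "finite V" "\<And>v. v \<in> V \<Longrightarrow> card v \<ge> 1"
  shows "(k + 1) * card V \<le> (\<Sum>v\<in>V. card v) + k * card {v \<in> V. card v \<le> k}"
proof -
  define S where "S = {v \<in> V. card v \<le> k}"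
  define B where "B = {v \<in> V. \<not> card v \<le> k}"
  have split: "V = S \<union> B" "S \<inter> B = {}" "finite S" "finite B"
    using assms(1) by (auto simp: S_def B_def)
  have "card S \<le> (\<Sum>v\<in>S. card v)"
    using sum_mono[of S "\<lambda>_. 1" card] assms(2) by (auto simp: S_def)
  moreover have "(k + 1) * card B \<le> (\<Sum>v\<in>B. card v)"
    using sum_mono[of B "\<lambda>_. k + 1" card] by (auto simp: B_def mult.commute)
  moreover have "(\<Sum>v\<in>V. card v) = (\<Sum>v\<in>S. card v) + (\<Sum>v\<in>B. card v)"
    using split by (simp add: sum.union_disjoint)
  moreover have "card V = card S + card B"
    using split by (simp add: card_Un_disjoint)
  ultimately show ?thesis by (simp add: S_def algebra_simps)
qed

context
  fixes D :: "'d set" and \<alpha> \<sigma> :: "'d \<Rightarrow> 'd"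
  assumes comb: "comb_map D \<alpha> \<sigma>"
begin

lemma comb_map_facts:
  "finite D" "\<alpha> permutes D" "\<sigma> permutes D" "(\<sigma> \<circ> \<alpha>) permutes D"
  "\<And>d. d \<in> D \<Longrightarrow> \<alpha> (\<alpha> d) = d"
  using comb permutes_compose by (auto simp: comb_map_def)

lemma card_darts_eq_twice_card_edges: "card D = 2 * card (map_edges D \<alpha> \<sigma>)"
proof -
  have "\<forall>e\<in>map_edges D \<alpha> \<sigma>. card e = 2"
    using comb by (auto simp: comb_map_def map_edges_def orbs_def orb_involution)
  then show ?thesis
    using sum_card_orbs[of \<alpha> D] comb_map_facts by (simp add: map_edges_def)
qed

lemma ME_eq: "ME D \<alpha> \<sigma> = int (card D) - 3 * int (card (map_faces D \<alpha> \<sigma>))"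
proof -
  have "ME D \<alpha> \<sigma> = (\<Sum>f\<in>map_faces D \<alpha> \<sigma>. int (card f)) - 3 * int (card (map_faces D \<alpha> \<sigma>))"
    by (simp add: ME_def fdeg_def sum_subtractf)
  also have "(\<Sum>f\<in>map_faces D \<alpha> \<sigma>. int (card f)) = int (card D)"
    using sum_card_orbs[of "\<sigma> \<circ> \<alpha>" D] comb_map_facts
    by (simp add: map_faces_def flip: of_nat_sum)
  finally show ?thesis .
qed

lemma card_vertices_le_darts_plus_LD: "6 * card (map_vertices D \<alpha> \<sigma>) \<le> card D + 5 * LD D \<alpha> \<sigma>"
proof -
  have "\<And>v. v \<in> map_vertices D \<alpha> \<sigma> \<Longrightarrow> card v \<ge> 1"
    using finite_nonempty_orbs[of \<sigma> D] comb_map_facts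
    by (fastforce simp: map_vertices_def Suc_le_eq card_gt_0_iff)
  then show ?thesis
    using card_le_sum_card_plus_card_small[of "map_vertices D \<alpha> \<sigma>" 5]
      sum_card_orbs[of \<sigma> D] finite_orbs[of D \<sigma>] comb_map_facts
    by (simp add: map_vertices_def LD_def vdeg_def)
qed

end

theorem lemma17:
  fixes D :: "'d set" and \<alpha> \<sigma> :: "'d \<Rightarrow> 'd"
  assumes "comb_map D \<alpha> \<sigma>"
    and "map_connected D \<alpha> \<sigma>"
    and "map_simple D \<alpha> \<sigma>"
    and "map_planar D \<alpha> \<sigma>"
    and "card (map_vertices D \<alpha> \<sigma>) \<ge> 3"
  shows "real (LD D \<alpha> \<sigma>) \<ge> 2/5 * real_of_int (ME D \<alpha> \<sigma>) + 12/5"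
proof -
  have "5 * int (LD D \<alpha> \<sigma>) \<ge> 2 * ME D \<alpha> \<sigma> + 12"
    using card_vertices_le_darts_plus_LD[OF assms(1)] card_darts_eq_twice_card_edges[OF assms(1)]
      ME_eq[OF assms(1)] assms(4)
    unfolding map_planar_def by linarith
  then have "real (5 * LD D \<alpha> \<sigma>) \<ge> real_of_int (2 * ME D \<alpha> \<sigma> + 12)"
    by linarith
  then show ?thesis by simp
qed

end
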